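(* For $0\le k<n$, the function $\frac{S_{k+1}}{S_k}$ belongs to $\mathcal{S}_n$, where $S_k(x_1,\dots,x_n)=\binom{n}{k}^{-1}\sum_{1\le i_1<\dots<i_k\le n}x_{i_1}\cdots x_{i_k}$ for $k=1,\dots,n$ and $S_0=1$.
   Context: $\Gamma_+=\{x\in\mathbb{R}^n: x_i>0\ \forall i\}$. $\mathcal{C}_n$ is the class of functions $f:\Gamma_+\to\mathbb{R}$ which are $C^\infty$, homogeneous of degree one, strictly monotone increasing ($\partial f/\partial x_i>0$ for each $i$), concave, and inverse-concave, meaning $f^*(x_1,\dots,x_n)=-f(x_1^{-1},\dots,x_n^{-1})$ is concave on $\Gamma_+$. $\mathcal{S}_n$ is the subclass of symmetric functions (invariant under permutations of the arguments) in $\mathcal{C}_n$. *)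

theory Defs
  imports "HOL-Analysis.Analysis"
begin

definition pos_cone :: "(real ^ 'n) set" where
  "pos_cone = {x. \<forall>i. x $ i > 0}"

definition partial :: "'n::finite \<Rightarrow> (real ^ 'n \<Rightarrow> real) \<Rightarrow> real ^ 'n \<Rightarrow> real" where
  "partial i f x = frechet_derivative f (at x) (axis i 1)"

fun Ck_on :: "nat \<Rightarrow> (real ^ 'n::finite) set \<Rightarrow> (real ^ 'n \<Rightarrow> real) \<Rightarrow> bool" where
  "Ck_on 0 S f = continuous_on S f"
| "Ck_on (Suc m) S f =
     ((\<forall>x\<in>S. f differentiable (at x)) \<and> (\<forall>i. Ck_on m S (partial i f)))"

definition smooth_on :: "(real ^ 'n::finite) set \<Rightarrow> (real ^ 'n \<Rightarrow> real) \<Rightarrow> bool" where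
  "smooth_on S f = (\<forall>m. Ck_on m S f)"

definition class_C :: "(real ^ 'n::finite \<Rightarrow> real) \<Rightarrow> bool" where
  "class_C f \<longleftrightarrow>
     smooth_on pos_cone f
   \<and> (\<forall>x\<in>pos_cone. \<forall>t>0. f (t *\<^sub>R x) = t * f x)
   \<and> (\<forall>x\<in>pos_cone. \<forall>i. partial i f x > 0)
   \<and> concave_on pos_cone f
   \<and> concave_on pos_cone (\<lambda>x. - f (\<chi> i. inverse (x $ i)))"

definition class_S :: "(real ^ 'n::finite \<Rightarrow> real) \<Rightarrow> bool" where
  "class_S f \<longleftrightarrow> class_C f \<and>
     (\<forall>p x. p permutes (UNIV :: 'n set) \<longrightarrow> x \<in> pos_cone \<longrightarrow> f (\<chi> i. x $ p i) = f x)"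

definition esym_norm :: "nat \<Rightarrow> real ^ 'n::finite \<Rightarrow> real" where
  "esym_norm k x = (\<Sum>I\<in>{I. I \<subseteq> (UNIV :: 'n set) \<and> card I = k}. \<Prod>i\<in>I. x $ i)
                    / real (CARD('n) choose k)"

end

theory Submission
  imports Defs
begin

text \<open>
  Up to a positive constant, S_(k+1) / S_k is the quotient Q_k = e_(k+1) / e_k of
  elementary symmetric functions. Euler's identity (k+1) e_(k+1)(x) = sum_i x_i e_k(x')
  and the splitting e_(k+1)(x) = x_i e_k(x') + e_(k+1)(x'), where x' is x without its
  i-th variable, give the recursion (k+2) Q_(k+1)(x) = sum_i x_i : Q_k(x'), in which
  a : b = ab/(a+b) is the parallel sum. As the parallel sum is superadditive and
  increasing, induction on k shows that Q_k is superadditive, hence concave because it is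
  homogeneous, and strictly increasing in each variable. Inverse-concavity follows from
  e_m(1/x) = e_(n-m)(x) / prod x, which turns Q_k(1/x) into 1 / Q_(n-k-1)(x).
  Smoothness holds because S_(k+1) / S_k is a quotient of polynomials, and the partial
  derivatives are positive because a concave function lies below its tangent planes.
\<close>

definition esym :: "'a set \<Rightarrow> nat \<Rightarrow> ('a \<Rightarrow> 'b::comm_semiring_1) \<Rightarrow> 'b" where
  "esym A k x = (\<Sum>I\<in>{I. I \<subseteq> A \<and> card I = k}. \<Prod>i\<in>I. x i)"

lemma finite_subsets_card: "finite A \<Longrightarrow> finite {I. I \<subseteq> A \<and> card I = k}"
  by (rule finite_subset[of _ "Pow A"]) auto

lemma esym_0:
  assumes "finite A"
  shows "esym A 0 x = 1"
proof -
  have "{I. I \<subseteq> A \<and> card I = 0} = {{}}"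
    using assms by (auto dest: finite_subset)
  then show ?thesis
    by (simp add: esym_def)
qed

lemma esym_empty_Suc: "esym {} (Suc k) x = 0"
proof -
  have no_subsets: "{I. I \<subseteq> {} \<and> card I = Suc k} = {}"
    by auto
  show ?thesis
    unfolding esym_def no_subsets by simp
qed

lemma esym_cong: "(\<And>i. i \<in> A \<Longrightarrow> x i = y i) \<Longrightarrow> esym A k x = esym A k y"
  unfolding esym_def by (intro sum.cong refl prod.cong) auto

lemma esym_pos:
  fixes x :: "'a \<Rightarrow> 'b::linordered_semidom"
  assumes "finite A" "k \<le> card A" "\<And>i. i \<in> A \<Longrightarrow> x i > 0"
  shows "esym A k x > 0"
proof -
  obtain T where "T \<subseteq> A" "card T = k"
    using obtain_subset_with_card_n[OF assms(2)] by metis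
  then show ?thesis
    unfolding esym_def using assms
    by (intro sum_pos prod_pos finite_subsets_card) auto
qed

lemma esym_insert:
  assumes "finite A" "a \<notin> A"
  shows "esym (insert a A) (Suc k) x = x a * esym A k x + esym A (Suc k) x"
proof -
  let ?S = "\<lambda>B m. {I. I \<subseteq> B \<and> card I = m}"
  have subsets_insert: "?S (insert a A) (Suc k) = ?S A (Suc k) \<union> insert a ` ?S A k"
  proof (intro set_eqI iffI)
    fix I assume I: "I \<in> ?S (insert a A) (Suc k)"
    show "I \<in> ?S A (Suc k) \<union> insert a ` ?S A k"
    proof (cases "a \<in> I")
      case True
      have "finite I" using I assms(1) by (auto dest: finite_subset)
      then have "I - {a} \<in> ?S A k" using I True by auto
      moreover have "I = insert a (I - {a})" using True by auto
      ultimately show ?thesis by blast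
    qed (use I in auto)
  next
    fix I assume "I \<in> ?S A (Suc k) \<union> insert a ` ?S A k"
    then show "I \<in> ?S (insert a A) (Suc k)"
      using assms by (auto simp: card_insert_if finite_subset)
  qed
  have inj: "inj_on (insert a) (?S A k)"
    using assms(2) by (intro inj_onI) (metis Diff_insert_absorb mem_Collect_eq subset_iff)
  have "esym (insert a A) (Suc k) x = esym A (Suc k) x + (\<Sum>J\<in>?S A k. \<Prod>i\<in>insert a J. x i)"
    unfolding esym_def subsets_insert using assms inj
    by (subst sum.union_disjoint) (auto simp: finite_subsets_card sum.reindex)
  also have "(\<Sum>J\<in>?S A k. \<Prod>i\<in>insert a J. x i) = (\<Sum>J\<in>?S A k. x a * (\<Prod>i\<in>J. x i))"
  proof (rule sum.cong[OF refl])
    fix J assume "J \<in> ?S A k"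
    then have "finite J" "a \<notin> J"
      using assms by (auto dest: finite_subset)
    then show "(\<Prod>i\<in>insert a J. x i) = x a * (\<Prod>i\<in>J. x i)"
      by simp
  qed
  finally show ?thesis
    by (simp add: esym_def sum_distrib_left add.commute)
qed

lemma esym_remove:
  assumes "finite A" "a \<in> A"
  shows "esym A (Suc k) x = x a * esym (A - {a}) k x + esym (A - {a}) (Suc k) x"
  using esym_insert[of "A - {a}" a k x] assms by (simp add: insert_absorb)

lemma esym_euler:
  assumes "finite A"
  shows "of_nat (Suc k) * esym A (Suc k) x = (\<Sum>i\<in>A. x i * esym (A - {i}) k x)"
  using assms
proof (induction A arbitrary: k rule: finite_induct)
  case empty
  then show ?case by (simp add: esym_empty_Suc)
next
  case (insert a A)
  have remove: "insert a A - {i} = insert a (A - {i})" if "i \<in> A" for i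
    using that insert.hyps(2) by auto
  have "(\<Sum>i\<in>insert a A. x i * esym (insert a A - {i}) k x)
      = x a * esym A k x + (\<Sum>i\<in>A. x i * esym (insert a (A - {i})) k x)"
    using insert.hyps by (simp add: remove)
  also have "\<dots> = of_nat (Suc k) * esym (insert a A) (Suc k) x"
  proof (cases k)
    case 0
    have "esym A (Suc 0) x = (\<Sum>i\<in>A. x i)"
      using insert.IH[of 0] insert.hyps by (simp add: esym_0)
    then show ?thesis
      using 0 insert.hyps esym_insert[OF insert.hyps, of 0 x] by (simp add: esym_0)
  next
    case (Suc m)
    have "(\<Sum>i\<in>A. x i * esym (insert a (A - {i})) k x)
       = x a * (\<Sum>i\<in>A. x i * esym (A - {i}) m x) + (\<Sum>i\<in>A. x i * esym (A - {i}) (Suc m) x)"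
      using insert.hyps Suc
      by (simp add: esym_insert sum.distrib sum_distrib_left algebra_simps)
    then show ?thesis
      using Suc insert.IH[of m] insert.IH[of "Suc m"] esym_insert[OF insert.hyps, of "Suc m" x]
        esym_insert[OF insert.hyps, of m x]
      by (simp add: algebra_simps)
  qed
  finally show ?case ..
qed

lemma esym_mult_const: "esym A k (\<lambda>i. t * x i) = t ^ k * esym A k x"
  unfolding esym_def sum_distrib_left
  by (intro sum.cong refl) (simp add: prod.distrib)

lemma esym_inverse:
  fixes x :: "'a \<Rightarrow> 'b::field"
  assumes "finite A" "m \<le> card A" "\<And>i. i \<in> A \<Longrightarrow> x i \<noteq> 0"
  shows "esym A m (\<lambda>i. inverse (x i)) = esym A (card A - m) x / (\<Prod>i\<in>A. x i)"
proof -
  have "esym A m (\<lambda>i. inverse (x i))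
      = (\<Sum>J\<in>{J. J \<subseteq> A \<and> card J = card A - m}. (\<Prod>i\<in>J. x i) / (\<Prod>i\<in>A. x i))"
    unfolding esym_def
  proof (rule sum.reindex_bij_witness[where i="\<lambda>J. A - J" and j="\<lambda>I. A - I"])
    fix I assume I: "I \<in> {I. I \<subseteq> A \<and> card I = m}"
    then have "finite I" using assms(1) by (auto dest: finite_subset)
    show "A - (A - I) = I" using I by auto
    show "A - I \<in> {J. J \<subseteq> A \<and> card J = card A - m}"
      using I \<open>finite I\<close> by (auto simp: card_Diff_subset)
    have "(\<Prod>i\<in>A. x i) = (\<Prod>i\<in>A - I. x i) * (\<Prod>i\<in>I. x i)"
      using I assms(1) by (metis (no_types, lifting) mem_Collect_eq prod.subset_diff)
    moreover have "(\<Prod>i\<in>I. x i) \<noteq> 0" "(\<Prod>i\<in>A - I. x i) \<noteq> 0"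
      using I assms \<open>finite I\<close> by auto
    ultimately show "(\<Prod>i\<in>A - I. x i) / (\<Prod>i\<in>A. x i) = (\<Prod>i\<in>I. inverse (x i))"
      using prod_inversef[of x I] by (simp add: o_def field_simps)
  next
    fix J assume J: "J \<in> {J. J \<subseteq> A \<and> card J = card A - m}"
    then have "finite J" using assms(1) by (auto dest: finite_subset)
    show "A - (A - J) = J" using J by auto
    show "A - J \<in> {I. I \<subseteq> A \<and> card I = m}"
      using J \<open>finite J\<close> assms(1,2) by (auto simp: card_Diff_subset card_mono)
  qed
  then show ?thesis
    unfolding esym_def by (simp add: sum_divide_distrib)
qed

lemma esym_permute:
  assumes "p permutes A"
  shows "esym A k (\<lambda>i. x (p i)) = esym A k x"
proof -
  let ?S = "{I. I \<subseteq> A \<and> card I = k}"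
  have image_mem: "q ` I \<in> ?S" if "q permutes A" "I \<in> ?S" for q I
    using that permutes_image[OF that(1)] inj_on_subset[OF permutes_inj[OF that(1)]]
    by (auto simp: card_image)
  show ?thesis
    unfolding esym_def
  proof (rule sum.reindex_bij_witness[where i="\<lambda>J. inv p ` J" and j="\<lambda>I. p ` I"])
    fix I assume "I \<in> ?S"
    then show "inv p ` p ` I = I" "p ` I \<in> ?S" "(\<Prod>i\<in>p ` I. x i) = (\<Prod>i\<in>I. x (p i))"
      using image_mem[OF assms] permutes_inj[OF assms]
      by (auto simp: image_inv_f_f prod.reindex inj_on_subset)
  next
    fix J assume "J \<in> ?S"
    then show "p ` inv p ` J = J" "inv p ` J \<in> ?S"
      using image_mem[OF permutes_inv[OF assms]] permutes_surj[OF assms]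
      by (auto simp: image_f_inv_f)
  qed
qed

definition parallel_sum :: "real \<Rightarrow> real \<Rightarrow> real" where
  "parallel_sum a b = a * b / (a + b)"

lemma parallel_sum_mono_right:
  assumes "0 < a" "0 < b" "b \<le> b'"
  shows "parallel_sum a b \<le> parallel_sum a b'"
proof -
  have "a * b * (a + b') \<le> a * b' * (a + b)"
    using assms by (simp add: algebra_simps mult_left_mono mult_right_mono power2_eq_square)
  then show ?thesis
    using assms unfolding parallel_sum_def by (simp add: divide_simps)
qed

lemma parallel_sum_strict_mono_left:
  assumes "0 < a" "a < a'" "0 < b"
  shows "parallel_sum a b < parallel_sum a' b"
proof -
  have "a * b * (a' + b) < a' * b * (a + b)"
    using assms by (simp add: algebra_simps mult_strict_right_mono power2_eq_square)
  then show ?thesis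
    using assms unfolding parallel_sum_def by (simp add: divide_simps)
qed

lemma parallel_sum_superadditive:
  assumes "0 < a1" "0 < a2" "0 < b1" "0 < b2"
  shows "parallel_sum a1 b1 + parallel_sum a2 b2 \<le> parallel_sum (a1 + a2) (b1 + b2)"
proof -
  have "(a1 + a2) * (b1 + b2) * ((a1 + b1) * (a2 + b2))
        - (a1 * b1 * (a2 + b2) + a2 * b2 * (a1 + b1)) * (a1 + a2 + b1 + b2)
      = (a1 * b2 - a2 * b1)\<^sup>2"
    by (simp add: algebra_simps power2_eq_square)
  then have "(a1 * b1 * (a2 + b2) + a2 * b2 * (a1 + b1)) * (a1 + a2 + b1 + b2)
      \<le> (a1 + a2) * (b1 + b2) * ((a1 + b1) * (a2 + b2))"
    by (smt (verit) zero_le_power2)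
  then show ?thesis
    using assms unfolding parallel_sum_def by (simp add: divide_simps add_pos_pos ac_simps)
qed

definition esym_ratio :: "'a set \<Rightarrow> nat \<Rightarrow> ('a \<Rightarrow> real) \<Rightarrow> real" where
  "esym_ratio A k x = esym A (Suc k) x / esym A k x"

lemma esym_ratio_cong: "(\<And>i. i \<in> A \<Longrightarrow> x i = y i) \<Longrightarrow> esym_ratio A k x = esym_ratio A k y"
  unfolding esym_ratio_def using esym_cong[of A x y] by simp

lemma esym_ratio_pos:
  "finite A \<Longrightarrow> Suc k \<le> card A \<Longrightarrow> (\<And>i. i \<in> A \<Longrightarrow> 0 < x i) \<Longrightarrow> 0 < esym_ratio A k x"
  unfolding esym_ratio_def by (intro divide_pos_pos esym_pos) auto

lemma esym_ratio_0: "finite A \<Longrightarrow> esym_ratio A 0 x = (\<Sum>i\<in>A. x i)"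
  using esym_euler[of A 0 x] by (simp add: esym_ratio_def esym_0)

lemma esym_ratio_Suc:
  assumes "finite A" "Suc (Suc k) \<le> card A" "\<And>i. i \<in> A \<Longrightarrow> 0 < x i"
  shows "real (Suc (Suc k)) * esym_ratio A (Suc k) x
       = (\<Sum>i\<in>A. parallel_sum (x i) (esym_ratio (A - {i}) k x))"
proof -
  have "real (Suc (Suc k)) * esym_ratio A (Suc k) x
      = (\<Sum>i\<in>A. x i * esym (A - {i}) (Suc k) x / esym A (Suc k) x)"
    using esym_euler[OF assms(1), of "Suc k" x]
    by (simp add: esym_ratio_def flip: sum_divide_distrib)
  also have "\<dots> = (\<Sum>i\<in>A. parallel_sum (x i) (esym_ratio (A - {i}) k x))"
  proof (rule sum.cong[OF refl])
    fix i assume i: "i \<in> A"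
    then have "0 < esym (A - {i}) k x" "0 < esym (A - {i}) (Suc k) x" "0 < x i"
      using assms by (auto intro!: esym_pos)
    then show "x i * esym (A - {i}) (Suc k) x / esym A (Suc k) x
        = parallel_sum (x i) (esym_ratio (A - {i}) k x)"
      unfolding esym_remove[OF assms(1) i] parallel_sum_def esym_ratio_def
      by (simp add: field_simps)
  qed
  finally show ?thesis .
qed

lemma esym_ratio_superadditive:
  assumes "finite A" "Suc k \<le> card A" "\<And>i. i \<in> A \<Longrightarrow> 0 < x i" "\<And>i. i \<in> A \<Longrightarrow> 0 < y i"
  shows "esym_ratio A k x + esym_ratio A k y \<le> esym_ratio A k (\<lambda>i. x i + y i)"
  using assms
proof (induction k arbitrary: A)
  case 0
  then show ?case by (simp add: esym_ratio_0 sum.distrib)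
next
  case (Suc k)
  let ?z = "\<lambda>i. x i + y i"
  let ?R = "\<lambda>x i. esym_ratio (A - {i}) k x"
  have "real (Suc (Suc k)) * (esym_ratio A (Suc k) x + esym_ratio A (Suc k) y)
      = (\<Sum>i\<in>A. parallel_sum (x i) (?R x i) + parallel_sum (y i) (?R y i))"
    using esym_ratio_Suc[of A k x] esym_ratio_Suc[of A k y] Suc.prems
    by (simp add: sum.distrib distrib_left)
  also have "\<dots> \<le> (\<Sum>i\<in>A. parallel_sum (?z i) (?R ?z i))"
  proof (rule sum_mono)
    fix i assume i: "i \<in> A"
    then have card: "Suc k \<le> card (A - {i})"
      using Suc.prems by simp
    then have pos: "0 < ?R x i" "0 < ?R y i"
      using Suc.prems by (auto intro!: esym_ratio_pos)
    have "parallel_sum (x i) (?R x i) + parallel_sum (y i) (?R y i)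
        \<le> parallel_sum (?z i) (?R x i + ?R y i)"
      using parallel_sum_superadditive pos Suc.prems i by auto
    also have "\<dots> \<le> parallel_sum (?z i) (?R ?z i)"
      using Suc.IH[of "A - {i}"] Suc.prems card pos i
      by (intro parallel_sum_mono_right) (auto simp: add_pos_pos)
    finally show "parallel_sum (x i) (?R x i) + parallel_sum (y i) (?R y i)
        \<le> parallel_sum (?z i) (?R ?z i)" .
  qed
  also have "\<dots> = real (Suc (Suc k)) * esym_ratio A (Suc k) ?z"
    using esym_ratio_Suc[of A k ?z] Suc.prems by (simp add: add_pos_pos)
  finally show ?case
    by simp
qed

lemma esym_ratio_strict_mono:
  assumes "finite A" "Suc k \<le> card A" "\<And>i. i \<in> A \<Longrightarrow> 0 < x i"
    and "j \<in> A" "x j < y j" "\<And>i. i \<in> A \<Longrightarrow> i \<noteq> j \<Longrightarrow> y i = x i"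
  shows "esym_ratio A k x < esym_ratio A k y"
  using assms
proof (induction k arbitrary: A)
  case 0
  have "x i \<le> y i" if "i \<in> A" for i
    using 0 that by (cases "i = j") auto
  then have "(\<Sum>i\<in>A. x i) < (\<Sum>i\<in>A. y i)"
    using 0 by (intro sum_strict_mono_ex1) auto
  then show ?case
    using 0 by (simp add: esym_ratio_0)
next
  case (Suc k)
  have y_pos: "0 < y i" if "i \<in> A" for i
    using Suc.prems that by (cases "i = j") (auto, metis order.strict_trans)
  let ?R = "\<lambda>x i. esym_ratio (A - {i}) k x"
  have le: "parallel_sum (x i) (?R x i) \<le> parallel_sum (y i) (?R y i)" if "i \<in> A" "i \<noteq> j" for i
  proof -
    have "Suc k \<le> card (A - {i})"
      using Suc.prems that by simp
    then have "0 < ?R x i" "?R x i < ?R y i"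
      using Suc.prems Suc.IH[of "A - {i}"] that by (auto intro!: esym_ratio_pos)
    then show ?thesis
      using Suc.prems that by (auto intro: parallel_sum_mono_right)
  qed
  have lt: "parallel_sum (x j) (?R x j) < parallel_sum (y j) (?R y j)"
  proof -
    have "0 < ?R x j"
      using Suc.prems by (auto intro!: esym_ratio_pos)
    moreover have "?R x j = ?R y j"
      by (intro esym_ratio_cong) (auto intro: Suc.prems(6)[symmetric])
    ultimately show ?thesis
      using Suc.prems by (auto intro: parallel_sum_strict_mono_left)
  qed
  have "real (Suc (Suc k)) * esym_ratio A (Suc k) x = (\<Sum>i\<in>A. parallel_sum (x i) (?R x i))"
    using Suc.prems by (intro esym_ratio_Suc) auto
  also have "\<dots> < (\<Sum>i\<in>A. parallel_sum (y i) (?R y i))"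
  proof (rule sum_strict_mono_ex1)
    show "\<forall>i\<in>A. parallel_sum (x i) (?R x i) \<le> parallel_sum (y i) (?R y i)"
      using le lt by (metis order.strict_implies_order)
  qed (use lt Suc.prems in auto)
  also have "\<dots> = real (Suc (Suc k)) * esym_ratio A (Suc k) y"
    using Suc.prems y_pos by (intro esym_ratio_Suc[symmetric]) auto
  finally show ?case
    by simp
qed

lemma esym_ratio_mult_const: "0 < t \<Longrightarrow> esym_ratio A k (\<lambda>i. t * x i) = t * esym_ratio A k x"
  unfolding esym_ratio_def esym_mult_const by (simp add: field_simps)

lemma esym_ratio_inverse:
  assumes "finite A" "Suc k \<le> card A" "\<And>i. i \<in> A \<Longrightarrow> x i \<noteq> 0"
  shows "esym_ratio A k (\<lambda>i. inverse (x i)) = inverse (esym_ratio A (card A - Suc k) x)"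
  using assms esym_inverse[of A "Suc k" x] esym_inverse[of A k x]
  by (simp add: esym_ratio_def Suc_diff_Suc prod_zero_iff)

lemma esym_ratio_permute: "p permutes A \<Longrightarrow> esym_ratio A k (\<lambda>i. x (p i)) = esym_ratio A k x"
  by (simp add: esym_ratio_def esym_permute)

lemma concave_on_cong:
  assumes "\<And>x. x \<in> S \<Longrightarrow> f x = g x"
  shows "concave_on S f \<longleftrightarrow> concave_on S g"
proof -
  have "f (u *\<^sub>R x + v *\<^sub>R y) = g (u *\<^sub>R x + v *\<^sub>R y)"
    if "convex S" "x \<in> S" "y \<in> S" "0 \<le> u" "0 \<le> v" "u + v = 1" for x y u v
    using that by (intro assms convexD)
  then show ?thesis
    using assms by (auto simp: concave_on_iff)
qed

lemma concave_on_if_superadditive_homogeneous: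
  fixes f :: "'a::real_vector \<Rightarrow> real"
  assumes "convex S"
    and scale: "\<And>x t. x \<in> S \<Longrightarrow> 0 < t \<Longrightarrow> t *\<^sub>R x \<in> S \<and> f (t *\<^sub>R x) = t * f x"
    and superadd: "\<And>x y. x \<in> S \<Longrightarrow> y \<in> S \<Longrightarrow> f x + f y \<le> f (x + y)"
  shows "concave_on S f"
  unfolding concave_on_iff
proof (intro conjI ballI allI impI assms(1))
  fix x y and u v :: real
  assume xy: "x \<in> S" "y \<in> S" and uv: "0 \<le> u" "0 \<le> v" "u + v = 1"
  show "u * f x + v * f y \<le> f (u *\<^sub>R x + v *\<^sub>R y)"
  proof (cases "u = 0 \<or> v = 0")
    case True
    then show ?thesis using uv by auto
  next
    case False
    then have "0 < u" "0 < v" using uv by auto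
    then show ?thesis
      using scale[of x u] scale[of y v] superadd[of "u *\<^sub>R x" "v *\<^sub>R y"] xy by auto
  qed
qed

lemma concave_on_neg_inverse:
  assumes g: "concave_on S g" and pos: "\<And>x. x \<in> S \<Longrightarrow> 0 < g x"
  shows "concave_on S (\<lambda>x. - inverse (g x))"
  unfolding concave_on_iff
proof (intro conjI ballI allI impI)
  show "convex S"
    using concave_on_imp_convex[OF g] .
  fix x y and u v :: real
  assume xy: "x \<in> S" "y \<in> S" and uv: "0 \<le> u" "0 \<le> v" "u + v = 1"
  have mean_pos: "0 < u * g x + v * g y"
    using uv pos[OF xy(1)] pos[OF xy(2)] by (cases "u = 0") (auto intro: add_pos_nonneg)
  have "u * g x + v * g y \<le> g (u *\<^sub>R x + v *\<^sub>R y)"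
    using g xy uv by (simp add: concave_on_iff)
  then have "inverse (g (u *\<^sub>R x + v *\<^sub>R y)) \<le> inverse (u * g x + v * g y)"
    using mean_pos by (intro le_imp_inverse_le)
  also have "\<dots> \<le> u * inverse (g x) + v * inverse (g y)"
    using convex_on_inverse[of "{0<..}"] pos xy uv unfolding convex_on_def by simp
  finally show "u * - inverse (g x) + v * - inverse (g y) \<le> - inverse (g (u *\<^sub>R x + v *\<^sub>R y))"
    by simp
qed

lemma has_real_derivative_along_line:
  fixes f :: "'a::real_normed_vector \<Rightarrow> real"
  assumes f': "(f has_derivative f') (at x)"
  shows "((\<lambda>t. f (x + t *\<^sub>R h)) has_real_derivative f' h) (at 0)"
proof -
  have "((\<lambda>t. x + t *\<^sub>R h) has_derivative (\<lambda>t. t *\<^sub>R h)) (at 0)"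
    by (auto intro!: derivative_eq_intros)
  moreover have "(f has_derivative f') (at ((\<lambda>t. x + t *\<^sub>R h) 0))"
    using f' by simp
  ultimately have "(f \<circ> (\<lambda>t. x + t *\<^sub>R h) has_derivative f' \<circ> (\<lambda>t. t *\<^sub>R h)) (at 0)"
    by (rule diff_chain_at)
  moreover have "f' \<circ> (\<lambda>t. t *\<^sub>R h) = (*) (f' h)"
    using linear_scale[OF has_derivative_linear[OF f']] by (auto simp: mult.commute)
  ultimately show ?thesis
    by (simp add: has_field_derivative_def o_def)
qed

lemma concave_on_imp_below_tangent:
  fixes f :: "'a::real_normed_vector \<Rightarrow> real"
  assumes f: "concave_on S f" and "x \<in> S" "y \<in> S" and f': "(f has_derivative f') (at x)"
  shows "f y - f x \<le> f' (y - x)"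
proof -
  define g where "g = (\<lambda>t. f (x + t *\<^sub>R (y - x)))"
  have "((\<lambda>t. (g t - g 0) / t) \<longlongrightarrow> f' (y - x)) (at 0)"
    using has_real_derivative_along_line[OF f', of "y - x"]
    by (simp add: g_def has_field_derivative_iff)
  then have "((\<lambda>t. (g t - g 0) / t) \<longlongrightarrow> f' (y - x)) (at_right 0)"
    by (rule tendsto_mono[OF at_le[OF subset_UNIV]])
  \<comment> \<open>for \<open>0 < t < 1\<close> concavity along the segment bounds the difference quotient by the chord slope\<close>
  moreover have "\<forall>\<^sub>F t in at_right 0. f y - f x \<le> (g t - g 0) / t"
    using eventually_at_right_real[OF zero_less_one]
  proof eventually_elim
    case (elim t)
    have "x + t *\<^sub>R (y - x) = (1 - t) *\<^sub>R x + t *\<^sub>R y"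
      by (simp add: algebra_simps)
    then have "(1 - t) * f x + t * f y \<le> g t"
      using concave_onD[OF f, of t x y] elim assms(2,3) by (simp add: g_def)
    then show ?case
      using elim by (simp add: g_def field_simps)
  qed
  ultimately show ?thesis
    by (intro tendsto_lowerbound) auto
qed

lemma partial_eq_derivative: "(f has_derivative D) (at x) \<Longrightarrow> partial i f x = D (axis i 1)"
  unfolding partial_def using frechet_derivative_at by metis

lemma has_derivative_cong_open:
  assumes "open S" "x \<in> S" "\<And>y. y \<in> S \<Longrightarrow> f y = g y"
  shows "(f has_derivative D) (at x) \<longleftrightarrow> (g has_derivative D) (at x)"
  using has_derivative_transform_within_open[OF _ assms(1,2)] assms(3) by metis

lemma partial_cong_open:
  assumes "open S" "x \<in> S" "\<And>y. y \<in> S \<Longrightarrow> f y = g y"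
  shows "partial i f x = partial i g x"
  unfolding partial_def frechet_derivative_def using has_derivative_cong_open[OF assms] by simp

lemma Ck_on_cong:
  assumes "open S" "\<And>y. y \<in> S \<Longrightarrow> f y = g y"
  shows "Ck_on m S f = Ck_on m S g"
  using assms(2)
proof (induction m arbitrary: f g)
  case 0
  then show ?case
    by (simp cong: continuous_on_cong)
next
  case (Suc m)
  have "f differentiable (at x) \<longleftrightarrow> g differentiable (at x)" if "x \<in> S" for x
    unfolding differentiable_def using has_derivative_cong_open[OF assms(1) that Suc.prems] by simp
  moreover have "Ck_on m S (partial i f) = Ck_on m S (partial i g)" for i
    using partial_cong_open[OF assms(1) _ Suc.prems] by (intro Suc.IH)
  ultimately show ?case
    by simp
qed

lemma Ck_on_partial_closed:
  assumes "open S"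
    and closed: "\<And>g. g \<in> C \<Longrightarrow>
      (\<forall>x\<in>S. g differentiable (at x)) \<and> (\<forall>i. \<exists>h\<in>C. \<forall>x\<in>S. partial i g x = h x)"
    and "g \<in> C"
  shows "Ck_on m S g"
  using assms(3)
proof (induction m arbitrary: g)
  case 0
  then have "\<forall>x\<in>S. isCont g x"
    using closed differentiable_imp_continuous_within by blast
  then show ?case
    by (simp add: continuous_at_imp_continuous_on)
next
  case (Suc m)
  have "Ck_on m S (partial i g)" for i
  proof -
    obtain h where "h \<in> C" "\<forall>x\<in>S. partial i g x = h x"
      using closed[OF Suc.prems] by blast
    then show ?thesis
      using Ck_on_cong[OF assms(1), of "partial i g" h] Suc.IH by simp
  qed
  then show ?case
    using closed[OF Suc.prems] by simp
qed

lemma partial_add: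
  assumes "f differentiable (at x)" "g differentiable (at x)"
  shows "partial i (\<lambda>x. f x + g x) x = partial i f x + partial i g x"
  unfolding partial_def[of i f] partial_def[of i g]
  using has_derivative_add[OF assms[unfolded frechet_derivative_works]]
  by (rule partial_eq_derivative)

lemma partial_mult:
  assumes "f differentiable (at x)" "g differentiable (at x)"
  shows "partial i (\<lambda>x. f x * g x) x = f x * partial i g x + partial i f x * g x"
  unfolding partial_def[of i f] partial_def[of i g]
  using has_derivative_mult[OF assms[unfolded frechet_derivative_works]]
  by (rule partial_eq_derivative)

lemma partial_divide:
  assumes "f differentiable (at x)" "g differentiable (at x)" "g x \<noteq> 0"
  shows "partial i (\<lambda>x. f x / g x) x = (partial i f x * g x - f x * partial i g x) / (g x * g x)"
  unfolding partial_def[of i f] partial_def[of i g]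
  using has_derivative_divide'[OF assms(1,2)[unfolded frechet_derivative_works] assms(3)]
  by (rule partial_eq_derivative)

lemma real_polynomial_function_partial:
  fixes p :: "real ^ 'n::finite \<Rightarrow> real"
  assumes "real_polynomial_function p"
  shows "real_polynomial_function (partial i p)"
  using assms
proof (induction rule: real_polynomial_function.induct)
  case (linear f)
  then have "partial i f = (\<lambda>x. f (axis i 1))"
    by (intro ext partial_eq_derivative bounded_linear_imp_has_derivative)
  then show ?case
    by auto
next
  case (const c)
  have "partial i (\<lambda>x::real ^ 'n. c) = (\<lambda>x. 0)"
    by (intro ext partial_eq_derivative has_derivative_const)
  then show ?case
    by auto
next
  case (add f g)
  then have "partial i (\<lambda>x. f x + g x) = (\<lambda>x. partial i f x + partial i g x)"
    by (intro ext partial_add differentiable_at_real_polynomial_function)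
  then show ?case
    using add.IH by auto
next
  case (mult f g)
  then have "partial i (\<lambda>x. f x * g x) = (\<lambda>x. f x * partial i g x + partial i f x * g x)"
    by (intro ext partial_mult differentiable_at_real_polynomial_function)
  then show ?case
    using mult by auto
qed

lemma smooth_on_polynomial_quotient:
  fixes p q :: "real ^ 'n::finite \<Rightarrow> real"
  assumes "open S" "real_polynomial_function p" "real_polynomial_function q"
    and "\<And>x. x \<in> S \<Longrightarrow> q x \<noteq> 0"
  shows "smooth_on S (\<lambda>x. p x / q x)"
proof -
  define C where "C = {(\<lambda>x. p x / q x) | p q :: real ^ 'n \<Rightarrow> real.
    real_polynomial_function p \<and> real_polynomial_function q \<and> (\<forall>x\<in>S. q x \<noteq> 0)}"
  have quotient_mem: "(\<lambda>x. p x / q x) \<in> C"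
    if "real_polynomial_function p" "real_polynomial_function q" "\<forall>x\<in>S. q x \<noteq> 0" for p q
    using that unfolding C_def by blast
  have "(\<forall>x\<in>S. g differentiable (at x)) \<and> (\<forall>i. \<exists>h\<in>C. \<forall>x\<in>S. partial i g x = h x)"
    if "g \<in> C" for g
  proof -
    obtain p q where g: "g = (\<lambda>x. p x / q x)"
      and pq: "real_polynomial_function p" "real_polynomial_function q" "\<forall>x\<in>S. q x \<noteq> 0"
      using \<open>g \<in> C\<close> unfolding C_def by blast
    have "\<exists>h\<in>C. \<forall>x\<in>S. partial i g x = h x" for i
    proof
      show "\<forall>x\<in>S. partial i g x = (partial i p x * q x - p x * partial i q x) / (q x * q x)"
        using pq by (simp add: g partial_divide differentiable_at_real_polynomial_function)
      show "(\<lambda>x. (partial i p x * q x - p x * partial i q x) / (q x * q x)) \<in> C"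
        using pq by (intro quotient_mem) (auto intro!: real_polynomial_function_partial)
    qed
    then show ?thesis
      using pq by (simp add: g differentiable_at_real_polynomial_function)
  qed
  then show ?thesis
    unfolding smooth_on_def using Ck_on_partial_closed[OF assms(1)] quotient_mem assms by blast
qed

lemma pos_cone_nth_pos: "x \<in> pos_cone \<Longrightarrow> 0 < x $ i"
  by (simp add: pos_cone_def)

lemma open_pos_cone: "open (pos_cone :: (real ^ 'n::finite) set)"
proof -
  have "pos_cone = (\<Inter>i. {x::real ^ 'n. 0 < x $ i})"
    unfolding pos_cone_def by auto
  also have "open \<dots>"
    by (rule open_INT) (auto intro!: open_Collect_less continuous_intros)
  finally show ?thesis .
qed

lemma convex_pos_cone: "convex (pos_cone :: (real ^ 'n::finite) set)"
proof (rule convexI)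
  fix x y :: "real ^ 'n" and u v :: real
  assume "x \<in> pos_cone" "y \<in> pos_cone" "0 \<le> u" "0 \<le> v" "u + v = 1"
  then show "u *\<^sub>R x + v *\<^sub>R y \<in> pos_cone"
    unfolding pos_cone_def
    by (cases "u = 0") (auto intro!: add_pos_nonneg simp: zero_less_mult_iff less_imp_le)
qed

lemma vec_nth_add: "vec_nth (x + y) = (\<lambda>i. x $ i + y $ i)"
  by (simp add: fun_eq_iff)

lemma vec_nth_scaleR: "vec_nth (c *\<^sub>R x) = (\<lambda>i. c * x $ i)"
  by (simp add: fun_eq_iff)

lemma class_CI:
  fixes f :: "real ^ 'n::finite \<Rightarrow> real"
  assumes smooth: "smooth_on pos_cone f"
    and "\<And>x t. x \<in> pos_cone \<Longrightarrow> 0 < t \<Longrightarrow> f (t *\<^sub>R x) = t * f x"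
    and concave: "concave_on pos_cone f"
    and "concave_on pos_cone (\<lambda>x. - f (\<chi> i. inverse (x $ i)))"
    and increasing: "\<And>x i. x \<in> pos_cone \<Longrightarrow> f x < f (x + axis i 1)"
  shows "class_C f"
proof -
  have "0 < partial i f x" if x: "x \<in> pos_cone" for x i
  proof -
    have "x + axis i 1 \<in> pos_cone"
      using x unfolding pos_cone_def by (auto simp: axis_def add_pos_nonneg)
    moreover have "f differentiable (at x)"
      using smooth x unfolding smooth_on_def by (metis Ck_on.simps(2))
    then have "(f has_derivative frechet_derivative f (at x)) (at x)"
      by (simp add: frechet_derivative_works)
    ultimately have "f (x + axis i 1) - f x \<le> frechet_derivative f (at x) (x + axis i 1 - x)"
      by (rule concave_on_imp_below_tangent[OF concave x])
    then show ?thesis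
      using increasing[OF x, of i] by (simp add: partial_def)
  qed
  then show ?thesis
    unfolding class_C_def using assms by blast
qed

lemma esym_norm_eq_esym: "esym_norm k x = esym UNIV k (vec_nth x) / real (CARD('n) choose k)"
  for x :: "real ^ 'n::finite"
  by (simp add: esym_norm_def esym_def)

lemma real_polynomial_function_esym_norm:
  "real_polynomial_function (esym_norm k :: real ^ 'n::finite \<Rightarrow> real)"
  unfolding esym_norm_def[abs_def]
  by (intro real_polynomial_function_divide real_polynomial_function_sum
      real_polynomial_function_prod) (auto intro: finite_subsets_card)

lemma esym_norm_pos: "k \<le> CARD('n) \<Longrightarrow> x \<in> pos_cone \<Longrightarrow> 0 < esym_norm k x"
  for x :: "real ^ 'n::finite"
  unfolding esym_norm_eq_esym pos_cone_def by (intro divide_pos_pos esym_pos) auto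

lemma esym_norm_quotient_eq:
  fixes x :: "real ^ 'n::finite"
  assumes "k < CARD('n)"
  shows "esym_norm (Suc k) x / esym_norm k x
       = real (CARD('n) choose k) / real (CARD('n) choose Suc k) * esym_ratio UNIV k (vec_nth x)"
  using assms by (simp add: esym_norm_eq_esym esym_ratio_def)

lemma concave_on_esym_ratio:
  assumes "Suc k \<le> CARD('n)"
  shows "concave_on pos_cone (\<lambda>x::real ^ 'n::finite. esym_ratio UNIV k (vec_nth x))"
proof (rule concave_on_if_superadditive_homogeneous[OF convex_pos_cone])
  show "t *\<^sub>R x \<in> pos_cone \<and>
      esym_ratio UNIV k (vec_nth (t *\<^sub>R x)) = t * esym_ratio UNIV k (vec_nth x)"
    if "x \<in> pos_cone" "0 < t" for x :: "real ^ 'n" and t :: real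
    using that by (simp add: pos_cone_def vec_nth_scaleR esym_ratio_mult_const)
  show "esym_ratio UNIV k (vec_nth x) + esym_ratio UNIV k (vec_nth y) \<le> esym_ratio UNIV k (vec_nth (x + y))"
    if "x \<in> pos_cone" "y \<in> pos_cone" for x y :: "real ^ 'n"
    using that assms unfolding vec_nth_add by (intro esym_ratio_superadditive) (auto simp: pos_cone_def)
qed

lemma concave_on_neg_esym_ratio_inverse:
  assumes "Suc k \<le> CARD('n)"
  shows "concave_on pos_cone (\<lambda>x::real ^ 'n::finite. - esym_ratio UNIV k (\<lambda>i. inverse (x $ i)))"
proof -
  let ?m = "CARD('n) - Suc k"
  have "- esym_ratio UNIV k (\<lambda>i. inverse (x $ i)) = - inverse (esym_ratio UNIV ?m (vec_nth x))"
    if "x \<in> pos_cone" for x :: "real ^ 'n"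
  proof -
    have "x $ i \<noteq> 0" for i
      using pos_cone_nth_pos[OF that, of i] by simp
    then show ?thesis
      using esym_ratio_inverse[of UNIV k "vec_nth x"] assms by simp
  qed
  then have "concave_on pos_cone (\<lambda>x::real ^ 'n. - esym_ratio UNIV k (\<lambda>i. inverse (x $ i)))
      \<longleftrightarrow> concave_on pos_cone (\<lambda>x::real ^ 'n. - inverse (esym_ratio UNIV ?m (vec_nth x)))"
    by (rule concave_on_cong)
  also have "\<dots>"
    using assms by (intro concave_on_neg_inverse concave_on_esym_ratio)
      (auto simp: pos_cone_def intro!: esym_ratio_pos)
  finally show ?thesis .
qed

lemma esym_ratio_increasing_coordinate:
  fixes x :: "real ^ 'n::finite"
  assumes "Suc k \<le> CARD('n)" "x \<in> pos_cone"
  shows "esym_ratio UNIV k (vec_nth x) < esym_ratio UNIV k (vec_nth (x + axis j 1))"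
  using assms by (intro esym_ratio_strict_mono[where j = j]) (auto simp: pos_cone_def axis_def)

theorem theorem2p6:
  fixes k :: nat
  assumes "k < CARD('n::finite)"
  shows "class_S (\<lambda>x::real ^ 'n. esym_norm (k + 1) x / esym_norm k x)"
proof -
  define c where "c = real (CARD('n) choose k) / real (CARD('n) choose Suc k)"
  let ?R = "\<lambda>x::real ^ 'n. esym_ratio UNIV k (vec_nth x)"
  have "0 < c"
    using assms by (simp add: c_def)
  have f_eq: "(\<lambda>x::real ^ 'n. esym_norm (k + 1) x / esym_norm k x) = (\<lambda>x. c * ?R x)"
    using esym_norm_quotient_eq[OF assms] by (simp add: c_def)
  have "class_C (\<lambda>x. c * ?R x)"
  proof (rule class_CI)
    show "smooth_on pos_cone (\<lambda>x. c * ?R x)"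
      unfolding f_eq[symmetric] using esym_norm_pos[of k] assms
      by (intro smooth_on_polynomial_quotient open_pos_cone real_polynomial_function_esym_norm) force
    show "c * ?R (t *\<^sub>R x) = t * (c * ?R x)" if "x \<in> pos_cone" "0 < t" for x t
      using that by (simp add: vec_nth_scaleR esym_ratio_mult_const)
    show "concave_on pos_cone (\<lambda>x. c * ?R x)"
      using \<open>0 < c\<close> assms by (intro concave_on_cmul concave_on_esym_ratio) auto
    show "concave_on pos_cone (\<lambda>x. - (c * ?R (\<chi> i. inverse (x $ i))))"
      using concave_on_cmul[OF _ concave_on_neg_esym_ratio_inverse[where 'n = 'n]] \<open>0 < c\<close> assms
      by (simp add: vec_lambda_inverse)
    show "c * ?R x < c * ?R (x + axis i 1)" if "x \<in> pos_cone" for x i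
      using that assms \<open>0 < c\<close> by (simp add: esym_ratio_increasing_coordinate)
  qed
  moreover have "c * ?R (\<chi> i. x $ p i) = c * ?R x" if "p permutes UNIV" for p x
    using that by (simp add: vec_lambda_inverse esym_ratio_permute)
  ultimately show ?thesis
    unfolding f_eq class_S_def by blast
qed

end
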